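(* Let $G=(G_1,\dots,G_N)$ be a finite normal-form game with strategy sets $\mathcal{A}_q$, fix a player $p$, a scalar $s_p>0$ and an arbitrary function $b_p:\mathcal{A}_{-p}\to\mathbb{R}$, and let $\hat G$ be the game with $\hat G_p(a)=s_pG_p(a)+b_p(a_{-p})$ and $\hat G_q=G_q$ for $q\ne p$. Suppose $G$ and $\hat G$ each have a unique maximum-entropy Nash equilibrium. Then the Nash-average ratings $r^{\mathrm{NA}}_p$ of $G$ and $\hat r^{\mathrm{NA}}_p$ of $\hat G$ induce the same ranking of player $p$'s strategies: for all $a_p,\tilde a_p\in\mathcal{A}_p$, $r^{\mathrm{NA}}_p(a_p)<r^{\mathrm{NA}}_p(\tilde a_p)$ iff $\hat r^{\mathrm{NA}}_p(a_p)<\hat r^{\mathrm{NA}}_p(\tilde a_p)$, and $r^{\mathrm{NA}}_p(a_p)=r^{\mathrm{NA}}_p(\tilde a_p)$ iff $\hat r^{\mathrm{NA}}_p(a_p)=\hat r^{\mathrm{NA}}_p(\tilde a_p)$.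
   Context: A Nash equilibrium is a profile of mixed strategies $(\sigma_1,\dots,\sigma_N)$ such that no player can increase its expected payoff by unilaterally deviating; the maximum-entropy Nash equilibrium $\sigma^{\mathrm{MENE}}$ is a Nash equilibrium maximizing the Shannon entropy of the product distribution $\otimes_q\sigma_q$. The Nash-average rating of player $p$'s strategy $a_p$ in game $G$ is $r^{\mathrm{NA}}_p(a_p)=\sum_{a_{-p}\in\mathcal{A}_{-p}}G_p(a_p,a_{-p})\prod_{q\ne p}\sigma^{\mathrm{MENE}}_q(a_q)$, computed with the maximum-entropy Nash equilibrium of that game. *)

theory Defs
  imports Complex_Main "HOL-Library.FuncSet"
begin

(* A finite normal-form game: players form the finite type 'p, player q has a
   finite nonempty strategy set A q, pure profiles are the extensional functions
   in PiE UNIV A, and G q a is player q's payoff at profile a. *)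

type_synonym ('p,'a) game = "'p \<Rightarrow> ('p \<Rightarrow> 'a) \<Rightarrow> real"
type_synonym ('p,'a) mixed_profile = "'p \<Rightarrow> 'a \<Rightarrow> real"

definition profiles :: "('p \<Rightarrow> 'a set) \<Rightarrow> ('p \<Rightarrow> 'a) set" where
  "profiles A = PiE UNIV A"

definition mixed_strategy :: "'a set \<Rightarrow> ('a \<Rightarrow> real) \<Rightarrow> bool" where
  "mixed_strategy S \<tau> \<longleftrightarrow> (\<forall>x\<in>S. 0 \<le> \<tau> x) \<and> (\<forall>x. x \<notin> S \<longrightarrow> \<tau> x = 0) \<and> (\<Sum>x\<in>S. \<tau> x) = 1"

definition mixed_profile :: "('p \<Rightarrow> 'a set) \<Rightarrow> ('p,'a) mixed_profile \<Rightarrow> bool" where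
  "mixed_profile A \<sigma> \<longleftrightarrow> (\<forall>q. mixed_strategy (A q) (\<sigma> q))"

definition prod_prob :: "('p::finite,'a) mixed_profile \<Rightarrow> ('p \<Rightarrow> 'a) \<Rightarrow> real" where
  "prod_prob \<sigma> a = (\<Prod>q\<in>UNIV. \<sigma> q (a q))"

definition exp_payoff :: "('p \<Rightarrow> 'a set) \<Rightarrow> ('p::finite,'a) game \<Rightarrow> ('p,'a) mixed_profile \<Rightarrow> 'p \<Rightarrow> real" where
  "exp_payoff A G \<sigma> p = (\<Sum>a\<in>profiles A. G p a * prod_prob \<sigma> a)"

definition nash_eq :: "('p \<Rightarrow> 'a set) \<Rightarrow> ('p::finite,'a) game \<Rightarrow> ('p,'a) mixed_profile \<Rightarrow> bool" where
  "nash_eq A G \<sigma> \<longleftrightarrow> mixed_profile A \<sigma> \<and>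
     (\<forall>p \<tau>. mixed_strategy (A p) \<tau> \<longrightarrow> exp_payoff A G (\<sigma>(p := \<tau>)) p \<le> exp_payoff A G \<sigma> p)"

definition prod_entropy :: "('p \<Rightarrow> 'a set) \<Rightarrow> ('p::finite,'a) mixed_profile \<Rightarrow> real" where
  "prod_entropy A \<sigma> = - (\<Sum>a\<in>profiles A. (let P = prod_prob \<sigma> a in if P = 0 then 0 else P * ln P))"

definition is_MENE :: "('p \<Rightarrow> 'a set) \<Rightarrow> ('p::finite,'a) game \<Rightarrow> ('p,'a) mixed_profile \<Rightarrow> bool" where
  "is_MENE A G \<sigma> \<longleftrightarrow> nash_eq A G \<sigma> \<and> (\<forall>\<tau>. nash_eq A G \<tau> \<longrightarrow> prod_entropy A \<tau> \<le> prod_entropy A \<sigma>)"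

definition MENE :: "('p \<Rightarrow> 'a set) \<Rightarrow> ('p::finite,'a) game \<Rightarrow> ('p,'a) mixed_profile" where
  "MENE A G = (THE \<sigma>. is_MENE A G \<sigma>)"

(* Nash-average rating: sum over opponents' profiles a_{-p} (extensional on UNIV - {p}) *)
definition NA_rating :: "('p \<Rightarrow> 'a set) \<Rightarrow> ('p::finite,'a) game \<Rightarrow> 'p \<Rightarrow> 'a \<Rightarrow> real" where
  "NA_rating A G p ap = (\<Sum>a\<in>PiE (UNIV - {p}) A.
      G p (a(p := ap)) * (\<Prod>q\<in>UNIV - {p}. MENE A G q (a q)))"

(* the transformed game: \<hat>G_p(a) = s * G_p(a) + b(a_{-p}), \<hat>G_q = G_q otherwise;
   b sees only a_{-p} since the p-th coordinate is overwritten *)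
definition affine_transform :: "('p,'a) game \<Rightarrow> 'p \<Rightarrow> real \<Rightarrow> (('p \<Rightarrow> 'a) \<Rightarrow> real) \<Rightarrow> ('p,'a) game" where
  "affine_transform G p s b = (\<lambda>q a. if q = p then s * G p a + b (a(p := undefined)) else G q a)"

end

theory Submission
  imports Defs
begin

text \<open>Player \<open>p\<close>'s expected payoff in the transformed game is \<open>s\<close> times the old one plus the
  expectation of \<open>b\<close> under the opponents' strategies, which does not depend on \<open>p\<close>'s own
  strategy. Since \<open>s > 0\<close>, the best responses of \<open>p\<close> and hence the Nash equilibria, their
  entropies and the maximum-entropy equilibrium are unchanged. With the same equilibrium the
  new Nash-average rating is \<open>s * r + c\<close> for a constant \<open>c\<close>, a strictly increasing map.\<close>

definition opponents_expectation ::
    "('p \<Rightarrow> 'a set) \<Rightarrow> ('p::finite,'a) mixed_profile \<Rightarrow> 'p \<Rightarrow> (('p \<Rightarrow> 'a) \<Rightarrow> real) \<Rightarrow> real" where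
  "opponents_expectation A \<sigma> p f = (\<Sum>g\<in>PiE (UNIV - {p}) A. f g * (\<Prod>q\<in>UNIV - {p}. \<sigma> q (g q)))"

lemma opponents_expectation_cong:
  assumes "\<And>g. g \<in> PiE (UNIV - {p}) A \<Longrightarrow> f g = f' g"
  shows "opponents_expectation A \<sigma> p f = opponents_expectation A \<sigma> p f'"
  unfolding opponents_expectation_def using assms by (intro sum.cong) auto

lemma opponents_expectation_affine:
  "opponents_expectation A \<sigma> p (\<lambda>g. s * f g + h g) =
     s * opponents_expectation A \<sigma> p f + opponents_expectation A \<sigma> p h"
  unfolding opponents_expectation_def
  by (simp add: distrib_right sum.distrib sum_distrib_left mult.assoc)

lemma opponents_expectation_fun_upd_self:
  "opponents_expectation A (\<sigma>(p := \<tau>)) p f = opponents_expectation A \<sigma> p f"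
  unfolding opponents_expectation_def by (intro sum.cong refl arg_cong2[where f = "(*)"] prod.cong) auto

lemma NA_rating_eq_opponents_expectation:
  "NA_rating A G p x = opponents_expectation A (MENE A G) p (\<lambda>g. G p (g(p := x)))"
  unfolding NA_rating_def opponents_expectation_def ..

lemma sum_profiles_decompose:
  assumes "\<forall>q. finite (A q)"
  shows "(\<Sum>a\<in>profiles A. F a) = (\<Sum>x\<in>A p. \<Sum>g\<in>PiE (UNIV - {p}) A. F (g(p := x)))"
proof -
  have "profiles A = (\<lambda>(x, g). g(p := x)) ` (A p \<times> PiE (UNIV - {p}) A)"
    unfolding profiles_def using PiE_insert_eq[of p "UNIV - {p}" A] by (simp add: insert_absorb)
  moreover have "inj_on (\<lambda>(x, g). g(p := x)) (A p \<times> PiE (UNIV - {p}) A)"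
    by (rule inj_combinator) simp
  ultimately have "(\<Sum>a\<in>profiles A. F a) = (\<Sum>(x, g)\<in>A p \<times> PiE (UNIV - {p}) A. F (g(p := x)))"
    by (simp add: sum.reindex split_def)
  then show ?thesis
    by (simp add: sum.cartesian_product split_def)
qed

lemma prod_prob_fun_upd:
  "prod_prob \<sigma> (g(p := x)) = \<sigma> p x * (\<Prod>q\<in>UNIV - {p}. \<sigma> q (g q))"
proof -
  have "prod_prob \<sigma> (g(p := x)) = \<sigma> p x * (\<Prod>q\<in>UNIV - {p}. \<sigma> q ((g(p := x)) q))"
    unfolding prod_prob_def by (subst prod.remove[of UNIV p]) auto
  also have "(\<Prod>q\<in>UNIV - {p}. \<sigma> q ((g(p := x)) q)) = (\<Prod>q\<in>UNIV - {p}. \<sigma> q (g q))"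
    by (rule prod.cong) auto
  finally show ?thesis .
qed

lemma exp_payoff_eq_sum_own_strategy:
  assumes "\<forall>q. finite (A q)"
  shows "exp_payoff A H \<sigma> r =
           (\<Sum>x\<in>A p. \<sigma> p x * opponents_expectation A \<sigma> p (\<lambda>g. H r (g(p := x))))"
  unfolding exp_payoff_def opponents_expectation_def sum_profiles_decompose[OF assms, of _ p]
  by (simp add: prod_prob_fun_upd sum_distrib_left algebra_simps)

lemma affine_transform_fun_upd_self:
  assumes "g \<in> PiE (UNIV - {p}) A"
  shows "affine_transform G p s b p (g(p := x)) = s * G p (g(p := x)) + b g"
proof -
  from assms have "g p = undefined" by auto
  then show ?thesis by (simp add: affine_transform_def fun_upd_idem)
qed

lemma opponents_expectation_affine_transform:
  "opponents_expectation A \<sigma> p (\<lambda>g. affine_transform G p s b p (g(p := x))) =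
     s * opponents_expectation A \<sigma> p (\<lambda>g. G p (g(p := x))) + opponents_expectation A \<sigma> p b"
  by (simp add: opponents_expectation_cong[OF affine_transform_fun_upd_self]
      opponents_expectation_affine)

lemma exp_payoff_affine_transform_self:
  assumes "\<forall>q. finite (A q)" and "mixed_strategy (A p) (\<sigma> p)"
  shows "exp_payoff A (affine_transform G p s b) \<sigma> p =
           s * exp_payoff A G \<sigma> p + opponents_expectation A \<sigma> p b"
proof -
  have "(\<Sum>x\<in>A p. \<sigma> p x) = 1"
    using assms(2) by (simp add: mixed_strategy_def)
  then show ?thesis
    unfolding exp_payoff_eq_sum_own_strategy[OF assms(1), of _ _ _ p]
      opponents_expectation_affine_transform
    by (simp add: algebra_simps sum.distrib sum_distrib_left flip: sum_distrib_right)
qed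

lemma exp_payoff_affine_transform_other:
  "q \<noteq> p \<Longrightarrow> exp_payoff A (affine_transform G p s b) \<sigma> q = exp_payoff A G \<sigma> q"
  by (simp add: exp_payoff_def affine_transform_def)

lemma nash_eq_affine_transform_iff:
  assumes "\<forall>q. finite (A q)" and "s > 0"
  shows "nash_eq A (affine_transform G p s b) \<sigma> \<longleftrightarrow> nash_eq A G \<sigma>"
proof -
  have "exp_payoff A (affine_transform G p s b) (\<sigma>(q := \<tau>)) q \<le> exp_payoff A (affine_transform G p s b) \<sigma> q
        \<longleftrightarrow> exp_payoff A G (\<sigma>(q := \<tau>)) q \<le> exp_payoff A G \<sigma> q"
    if "mixed_profile A \<sigma>" and "mixed_strategy (A q) \<tau>" for q \<tau>
  proof (cases "q = p")
    case True
    with that have "mixed_strategy (A p) (\<sigma> p)" and "mixed_strategy (A p) ((\<sigma>(p := \<tau>)) p)"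
      by (simp_all add: mixed_profile_def)
    with True \<open>s > 0\<close> show ?thesis
      by (simp add: exp_payoff_affine_transform_self[OF assms(1)] opponents_expectation_fun_upd_self)
  qed (simp add: exp_payoff_affine_transform_other)
  then show ?thesis
    unfolding nash_eq_def by blast
qed

lemma MENE_affine_transform:
  assumes "\<forall>q. finite (A q)" and "s > 0"
  shows "MENE A (affine_transform G p s b) = MENE A G"
  unfolding MENE_def is_MENE_def nash_eq_affine_transform_iff[OF assms] ..

lemma NA_rating_affine_transform:
  assumes "\<forall>q. finite (A q)" and "s > 0"
  shows "NA_rating A (affine_transform G p s b) p x =
           s * NA_rating A G p x + opponents_expectation A (MENE A G) p b"
  unfolding NA_rating_eq_opponents_expectation MENE_affine_transform[OF assms]
  by (rule opponents_expectation_affine_transform)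

text \<open>Only finiteness and \<open>s > 0\<close> are used: both games have literally the same
  maximum-entropy equilibria, so the two definite descriptions agree even without uniqueness.\<close>

theorem mainTheorem8:
  fixes A :: "'p::finite \<Rightarrow> 'a set" and G :: "('p,'a) game"
    and p :: 'p and s :: real and b :: "('p \<Rightarrow> 'a) \<Rightarrow> real"
  assumes "\<forall>q. finite (A q) \<and> A q \<noteq> {}"
    and "s > 0"
    and "\<exists>!\<sigma>. is_MENE A G \<sigma>"
    and "\<exists>!\<sigma>. is_MENE A (affine_transform G p s b) \<sigma>"
    and "ap \<in> A p" and "ap' \<in> A p"
  shows "(NA_rating A G p ap < NA_rating A G p ap' \<longleftrightarrow>
          NA_rating A (affine_transform G p s b) p ap < NA_rating A (affine_transform G p s b) p ap')
       \<and> (NA_rating A G p ap = NA_rating A G p ap' \<longleftrightarrow>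
          NA_rating A (affine_transform G p s b) p ap = NA_rating A (affine_transform G p s b) p ap')"
proof -
  have "\<forall>q. finite (A q)"
    using assms(1) by simp
  with \<open>s > 0\<close> show ?thesis
    by (simp add: NA_rating_affine_transform)
qed

end
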